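(* (Quantum Efron–Stein decomposition.) Let $\varrho=\rho_1\otimes\cdots\otimes\rho_n$ be a product state on $\mathcal K=\bigotimes_{i=1}^n\mathcal H_i$ (finite-dimensional Hilbert spaces). Then any observable $X$ on $\mathcal K$ has a unique decomposition $X=\sum_{J\subseteq[n]}X^{=J}$ into observables $X^{=J}$ such that: (1) $X^{=J}$ acts nontrivially only on the subsystems in $J$; (2) $\mathcal E_jX^{=J}=0$ for all $j\in J$. Moreover: (3) for every $J$, the map $X\mapsto X^{=J}$ is linear and $\sum_{I\subseteq J}X^{=I}=\mathcal E_{\overline J}X$; (4) for $I\ne J$, $\langle X^{=I},X^{=J}\rangle_\varrho=0$.
   Context: For $i\in[n]$, $\mathcal E_iY=\mathrm{Tr}_i[(\rho_i\otimes I)Y]$, regarded as an operator on $\mathcal K$ by tensoring with the identity on $\mathcal H_i$; for $I\subseteq[n]$, $\mathcal E_I=\prod_{i\in I}\mathcal E_i$ (these maps commute; $\mathcal E_\emptyset$ is the identity map), and $\overline J=[n]\setminus J$. "Acts nontrivially only on the subsystems in $J$" means the operator is of the form $Y\otimes I_{\overline J}$ with $Y$ acting on $\bigotimes_{j\in J}\mathcal H_j$. The inner product is $\langle Y,Z\rangle_\varrho=\mathrm{Tr}[\varrho Y^\dagger Z]$. *)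

theory Defs
  imports Complex_Main "HOL-Library.FuncSet"
begin

text \<open>Subsystem i (for i < n) is the Hilbert space H_i = C^(d i) with
standard basis indexed by {..<d i}. The composite space K = H_0 (x) ... (x) H_(n-1)
has orthonormal basis indexed by the tuples in idx d n (extensional functions on {..<n}).
An operator on K is represented by its matrix entries: a function of two basis indices,
required to vanish outside idx d n.  Operators on a single H_i are functions
nat => nat => complex vanishing outside {..<d i} x {..<d i}.
Subsystems are numbered 0..n-1, so [n] is {..<n}.\<close>

type_synonym qop = "(nat \<Rightarrow> nat) \<Rightarrow> (nat \<Rightarrow> nat) \<Rightarrow> complex"

definition idx :: "(nat \<Rightarrow> nat) \<Rightarrow> nat \<Rightarrow> (nat \<Rightarrow> nat) set" where
  "idx d n = PiE {..<n} (\<lambda>i. {..<d i})"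

definition is_op :: "(nat \<Rightarrow> nat) \<Rightarrow> nat \<Rightarrow> qop \<Rightarrow> bool" where
  "is_op d n X \<longleftrightarrow> (\<forall>a b. (a \<notin> idx d n \<or> b \<notin> idx d n) \<longrightarrow> X a b = 0)"

definition observable :: "(nat \<Rightarrow> nat) \<Rightarrow> nat \<Rightarrow> qop \<Rightarrow> bool" where
  "observable d n X \<longleftrightarrow> is_op d n X \<and> (\<forall>a b. X a b = cnj (X b a))"

definition density :: "nat \<Rightarrow> (nat \<Rightarrow> nat \<Rightarrow> complex) \<Rightarrow> bool" where
  "density m \<rho> \<longleftrightarrow>
     (\<forall>k l. (k \<ge> m \<or> l \<ge> m) \<longrightarrow> \<rho> k l = 0) \<and>
     (\<forall>k l. \<rho> k l = cnj (\<rho> l k)) \<and>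
     (\<forall>v :: nat \<Rightarrow> complex. 0 \<le> Re (\<Sum>k<m. \<Sum>l<m. cnj (v k) * \<rho> k l * v l)) \<and>
     (\<Sum>k<m. \<rho> k k) = 1"

definition prod_state :: "(nat \<Rightarrow> nat) \<Rightarrow> nat \<Rightarrow> (nat \<Rightarrow> nat \<Rightarrow> nat \<Rightarrow> complex) \<Rightarrow> qop" where
  "prod_state d n \<rho> = (\<lambda>a b. if a \<in> idx d n \<and> b \<in> idx d n
                               then (\<Prod>i<n. \<rho> i (a i) (b i)) else 0)"

text \<open>E_i Y = Tr_i[(rho_i (x) I) Y], tensored with the identity on H_i.
Entry (a,b) equals [a_i = b_i] * sum_(k,l) rho_i(k,l) * Y(a[i:=l], b[i:=k]).\<close>
definition cond_exp :: "(nat \<Rightarrow> nat) \<Rightarrow> nat \<Rightarrow> (nat \<Rightarrow> nat \<Rightarrow> nat \<Rightarrow> complex) \<Rightarrow> nat \<Rightarrow> qop \<Rightarrow> qop" where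
  "cond_exp d n \<rho> i Y = (\<lambda>a b.
     if a \<in> idx d n \<and> b \<in> idx d n \<and> a i = b i
     then (\<Sum>k<d i. \<Sum>l<d i. \<rho> i k l * Y (a(i := l)) (b(i := k)))
     else 0)"

text \<open>E_I = product of the E_i for i in I (they commute; E_{} is the identity).\<close>
definition cond_exp_set :: "(nat \<Rightarrow> nat) \<Rightarrow> nat \<Rightarrow> (nat \<Rightarrow> nat \<Rightarrow> nat \<Rightarrow> complex) \<Rightarrow> nat set \<Rightarrow> qop \<Rightarrow> qop" where
  "cond_exp_set d n \<rho> I Y = foldr (cond_exp d n \<rho>) (sorted_list_of_set I) Y"

text \<open>X acts nontrivially only on the subsystems in J: X = Y (x) I_{[n]-J}
with Y an operator on the tensor product of the H_j, j in J (indexed by idx d J-tuples).\<close>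
definition acts_only_on :: "(nat \<Rightarrow> nat) \<Rightarrow> nat \<Rightarrow> nat set \<Rightarrow> qop \<Rightarrow> bool" where
  "acts_only_on d n J X \<longleftrightarrow> is_op d n X \<and>
     (\<exists>Y :: qop. \<forall>a \<in> idx d n. \<forall>b \<in> idx d n.
        X a b = (if (\<forall>i \<in> {..<n} - J. a i = b i)
                 then Y (restrict a J) (restrict b J) else 0))"

text \<open>Inner product <Y,Z>_varrho = Tr[varrho Y^dagger Z].\<close>
definition inner_state :: "(nat \<Rightarrow> nat) \<Rightarrow> nat \<Rightarrow> qop \<Rightarrow> qop \<Rightarrow> qop \<Rightarrow> complex" where
  "inner_state d n \<sigma> Y Z =
     (\<Sum>a\<in>idx d n. \<Sum>b\<in>idx d n. \<Sum>c\<in>idx d n. \<sigma> a b * cnj (Y c b) * Z c a)"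

end

theory Submission
  imports Defs
begin

(* The partial expectations E_i commute, are idempotent, fix every operator that acts
   trivially on subsystem i (this is where tr rho_i = 1 enters), and turn an operator acting
   only on J into one acting only on J - {i}. Hence E_{[n]-I} X acts only on I, and the
   Moebius inversion X^{=J} = sum_{I <= J} (-1)^(|J|-|I|) E_{[n]-I} X acts only on J and has
   the partial sums sum_{I <= J} X^{=I} = E_{[n]-J} X. For j in J, E_j maps the terms for
   I - {j} and I + {j} to the same operator with opposite signs, so E_j X^{=J} = 0.
   Conversely, (1) and (2) force E_{[n]-I} X = sum_{J <= I} Y_J for any decomposition
   X = sum_J Y_J, and Moebius inversion gives Y_J = X^{=J}. For orthogonality pick j in
   J - I: then varrho = rho_j (x) varrho' and X^{=I} = A (x) I_j, so the inner product
   sees X^{=J} only through E_j X^{=J} = 0; the case I - J <> {} follows by conjugate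
   symmetry. *)

section \<open>Alternating sums over subsets\<close>

lemma sum_Pow_insert:
  assumes "finite A" "x \<notin> A"
  shows "(\<Sum>I\<in>Pow (insert x A). f I) = (\<Sum>I\<in>Pow A. f I + f (insert x I))"
proof -
  have "inj_on (insert x) (Pow A)"
    using assms(2) by (auto intro!: inj_onI)
  then have "(\<Sum>I\<in>insert x ` Pow A. f I) = (\<Sum>I\<in>Pow A. f (insert x I))"
    by (simp add: sum.reindex)
  moreover have "(\<Sum>I\<in>Pow (insert x A). f I) = (\<Sum>I\<in>Pow A. f I) + (\<Sum>I\<in>insert x ` Pow A. f I)"
    unfolding Pow_insert by (rule sum.union_disjoint) (use assms in auto)
  ultimately show ?thesis
    by (simp add: sum.distrib)
qed

lemma alternating_sum_Pow_Diff_singleton: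
  fixes h :: "'a set \<Rightarrow> 'b::comm_ring_1"
  assumes "finite J" "j \<in> J"
  shows "(\<Sum>I\<in>Pow J. (-1) ^ (card J - card I) * h (I - {j})) = 0"
proof -
  define K where "K = J - {j}"
  have J: "J = insert j K" "j \<notin> K" "finite K"
    using assms by (auto simp: K_def)
  have "(-1) ^ (card J - card I) * h (I - {j}) + (-1) ^ (card J - card (insert j I)) * h (insert j I - {j}) = 0"
    if "I \<subseteq> K" for I
  proof -
    have "finite I" "j \<notin> I" "card I \<le> card K"
      using that J by (auto intro: finite_subset card_mono)
    then show ?thesis
      using J by (simp add: Suc_diff_le)
  qed
  then show ?thesis
    unfolding J(1) by (simp add: sum_Pow_insert J)
qed

lemma sum_Pow_mobius:
  fixes g :: "'a set \<Rightarrow> 'b::comm_ring_1"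
  assumes "finite K"
  shows "(\<Sum>I\<in>Pow K. \<Sum>J\<in>Pow I. (-1) ^ (card I - card J) * g J) = g K"
proof -
  define G where "G S = (\<Sum>T\<in>Pow S. (-1) ^ card T * g T)" for S
  have "(\<Sum>J\<in>Pow I. (-1) ^ (card I - card J) * g J) = (-1) ^ card I * G I" if "I \<subseteq> K" for I
  proof -
    have "(-1) ^ (card I - card J) = ((-1) ^ card I * (-1) ^ card J :: 'b)" if "J \<subseteq> I" for J
      using that \<open>I \<subseteq> K\<close> assms
      by (metis card_mono finite_subset neg_one_power_add_eq_neg_one_power_diff power_add)
    then show ?thesis
      by (simp add: G_def sum_distrib_left mult.assoc)
  qed
  then have "(\<Sum>I\<in>Pow K. \<Sum>J\<in>Pow I. (-1) ^ (card I - card J) * g J) = (\<Sum>I\<in>Pow K. (-1) ^ card I * G I)"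
    by simp
  also have "\<dots> = g K"
    by (rule inclusion_exclusion_symmetric[symmetric]) (use assms in \<open>simp_all add: G_def\<close>)
  finally show ?thesis .
qed

section \<open>Partial expectations\<close>

lemma idx_fun_upd: "a \<in> idx d n \<Longrightarrow> i < n \<Longrightarrow> l < d i \<Longrightarrow> a(i := l) \<in> idx d n"
  unfolding idx_def by (auto simp: PiE_def extensional_def)

lemma cond_exp_is_op: "is_op d n (cond_exp d n \<rho> i Y)"
  unfolding is_op_def cond_exp_def by auto

lemma cond_exp_lincomb:
  "cond_exp d n \<rho> i (\<lambda>a b. r * X a b + s * Z a b) =
   (\<lambda>a b. r * cond_exp d n \<rho> i X a b + s * cond_exp d n \<rho> i Z a b)"
  unfolding cond_exp_def by (auto simp: sum_distrib_left sum.distrib algebra_simps intro!: ext)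

lemma cond_exp_sum:
  "cond_exp d n \<rho> i (\<lambda>a b. \<Sum>t\<in>A. c t * F t a b) =
   (\<lambda>a b. \<Sum>t\<in>A. c t * cond_exp d n \<rho> i (F t) a b)"
  unfolding cond_exp_def
  by (auto simp: sum_distrib_left mult_ac sum.swap[of _ "{..<d i}" A] intro!: ext)

lemma cond_exp_commute:
  assumes "i < n" "j < n"
  shows "cond_exp d n \<rho> i (cond_exp d n \<rho> j Y) = cond_exp d n \<rho> j (cond_exp d n \<rho> i Y)"
proof (cases "i = j")
  case False
  have expand: "cond_exp d n \<rho> i (cond_exp d n \<rho> j Y) a b =
    (if a \<in> idx d n \<and> b \<in> idx d n \<and> a i = b i \<and> a j = b j then
        \<Sum>k<d i. \<Sum>l<d i. \<Sum>k'<d j. \<Sum>l'<d j.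
        \<rho> i k l * \<rho> j k' l' * Y (a(i := l, j := l')) (b(i := k, j := k'))
     else 0)" if "i \<noteq> j" "i < n" "j < n" for i j a b
    using that
    by (auto simp: cond_exp_def idx_fun_upd sum_distrib_left mult.assoc
        intro!: sum.cong)
  have swap: "(\<Sum>k\<in>A. \<Sum>l\<in>A. \<Sum>k'\<in>B. \<Sum>l'\<in>B. f k l k' l') =
    (\<Sum>k'\<in>B. \<Sum>l'\<in>B. \<Sum>k\<in>A. \<Sum>l\<in>A. f k l k' l')"
    for A B and f :: "nat \<Rightarrow> nat \<Rightarrow> nat \<Rightarrow> nat \<Rightarrow> complex"
    by (simp add: sum.swap[of _ A B])
  show ?thesis
    unfolding expand[OF False assms] expand[OF False[symmetric] assms(2,1)]
    using False by (intro ext, subst swap) (auto simp: fun_upd_twist mult.commute intro!: sum.cong)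
qed simp

lemma cond_exp_observable:
  assumes X: "observable d n X" and herm: "\<And>k l. \<rho> i k l = cnj (\<rho> i l k)"
  shows "observable d n (cond_exp d n \<rho> i X)"
  unfolding observable_def
proof (intro conjI allI cond_exp_is_op)
  fix a b
  have "cnj (X a' b') = X b' a'" "cnj (\<rho> i k l) = \<rho> i l k" for a' b' k l
    using X herm unfolding observable_def by (metis complex_cnj_cnj)+
  then show "cond_exp d n \<rho> i X a b = cnj (cond_exp d n \<rho> i X b a)"
    unfolding cond_exp_def
    using sum.swap[of "\<lambda>k l. \<rho> i k l * X (a(i := l)) (b(i := k))" "{..<d i}" "{..<d i}"]
    by auto
qed

lemma observable_sum:
  assumes "\<And>t. t \<in> A \<Longrightarrow> observable d n (F t)" "\<And>t. t \<in> A \<Longrightarrow> cnj (c t) = c t"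
  shows "observable d n (\<lambda>a b. \<Sum>t\<in>A. c t * F t a b)"
  unfolding observable_def
proof (intro conjI allI)
  show "is_op d n (\<lambda>a b. \<Sum>t\<in>A. c t * F t a b)"
    using assms(1) unfolding observable_def is_op_def by auto
  fix a b
  have "cnj (F t b a) = F t a b" if "t \<in> A" for t
    using assms(1)[OF that] unfolding observable_def by (metis complex_cnj_cnj)
  then show "(\<Sum>t\<in>A. c t * F t a b) = cnj (\<Sum>t\<in>A. c t * F t b a)"
    using assms(2) by simp
qed

section \<open>Locality\<close>

lemma acts_only_on_all: "is_op d n X \<Longrightarrow> acts_only_on d n {..<n} X"
  unfolding acts_only_on_def
  by (auto intro!: exI[of _ X] simp: idx_def PiE_def extensional_restrict)

lemma acts_only_on_mono:
  assumes "acts_only_on d n I Z" "I \<subseteq> J"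
  shows "acts_only_on d n J Z"
proof -
  obtain Y where op: "is_op d n Z" and Y: "\<And>a b. a \<in> idx d n \<Longrightarrow> b \<in> idx d n \<Longrightarrow>
      Z a b = (if \<forall>m\<in>{..<n} - I. a m = b m then Y (restrict a I) (restrict b I) else 0)"
    using assms(1) unfolding acts_only_on_def by blast
  show ?thesis
    unfolding acts_only_on_def
    using assms(2)
    by (intro conjI op exI[of _ "\<lambda>a' b'. if \<forall>m\<in>{..<n} \<inter> (J - I). a' m = b' m
        then Y (restrict a' I) (restrict b' I) else 0"] ballI) (auto simp: Y Int_absorb1)
qed

lemma acts_only_on_sum:
  assumes "\<And>t. t \<in> A \<Longrightarrow> acts_only_on d n J (F t)"
  shows "acts_only_on d n J (\<lambda>a b. \<Sum>t\<in>A. c t * F t a b)"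
proof -
  have "\<forall>t\<in>A. \<exists>Y. \<forall>a\<in>idx d n. \<forall>b\<in>idx d n.
      F t a b = (if \<forall>m\<in>{..<n} - J. a m = b m then Y (restrict a J) (restrict b J) else 0)"
    using assms unfolding acts_only_on_def by blast
  then obtain Y where Y: "\<forall>t\<in>A. \<forall>a\<in>idx d n. \<forall>b\<in>idx d n.
      F t a b = (if \<forall>m\<in>{..<n} - J. a m = b m then Y t (restrict a J) (restrict b J) else 0)"
    by (auto dest!: bchoice)
  have "is_op d n (F t)" if "t \<in> A" for t
    using assms that unfolding acts_only_on_def by blast
  moreover have "(\<Sum>t\<in>A. c t * (if P then G t else 0)) = (if P then \<Sum>t\<in>A. c t * G t else 0)"
    for P and G :: "'a \<Rightarrow> complex"
    by (cases P) simp_all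
  ultimately show ?thesis
    unfolding acts_only_on_def
    by (intro conjI exI[of _ "\<lambda>a' b'. \<Sum>t\<in>A. c t * Y t a' b'"] ballI)
      (auto simp: is_op_def Y)
qed

lemma acts_only_on_cond_exp:
  assumes "acts_only_on d n J Z" "i \<in> J" "i < n"
  shows "acts_only_on d n (J - {i}) (cond_exp d n \<rho> i Z)"
proof -
  obtain Y where Y: "\<And>a b. a \<in> idx d n \<Longrightarrow> b \<in> idx d n \<Longrightarrow>
      Z a b = (if \<forall>m\<in>{..<n} - J. a m = b m then Y (restrict a J) (restrict b J) else 0)"
    using assms(1) unfolding acts_only_on_def by blast
  have restrict_upd: "restrict (c(i := l)) J = (restrict c (J - {i}))(i := l)" for c :: "nat \<Rightarrow> nat" and l
    using assms(2) by (auto simp: restrict_def)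
  have "cond_exp d n \<rho> i Z a b = (if \<forall>m\<in>{..<n} - (J - {i}). a m = b m
      then \<Sum>k<d i. \<Sum>l<d i.
        \<rho> i k l * Y ((restrict a (J - {i}))(i := l)) ((restrict b (J - {i}))(i := k))
      else 0)" if ab: "a \<in> idx d n" "b \<in> idx d n" for a b
  proof (cases "a i = b i")
    case True
    have agree: "(\<forall>m\<in>{..<n} - J. (a(i := l)) m = (b(i := k)) m) \<longleftrightarrow>
        (\<forall>m\<in>{..<n} - (J - {i}). a m = b m)"
      for k l
      using True assms(2) by auto
    have "Z (a(i := l)) (b(i := k)) = (if \<forall>m\<in>{..<n} - (J - {i}). a m = b m
        then Y ((restrict a (J - {i}))(i := l)) ((restrict b (J - {i}))(i := k)) else 0)"
      if "k < d i" "l < d i" for k l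
      using Y[OF idx_fun_upd[OF ab(1) assms(3) that(2)] idx_fun_upd[OF ab(2) assms(3) that(1)]]
      unfolding agree restrict_upd .
    then show ?thesis
      using ab True
      by (cases "\<forall>m\<in>{..<n} - (J - {i}). a m = b m") (auto simp: cond_exp_def)
  next
    case False
    then show ?thesis
      using assms(2,3) by (auto simp: cond_exp_def)
  qed
  then show ?thesis
    unfolding acts_only_on_def by (intro conjI cond_exp_is_op exI ballI)
qed

lemma acts_only_on_tensor_id:
  assumes "acts_only_on d n I A" "j \<notin> I" "j < n"
  obtains A' where "\<And>a b x y. a(j := x) \<in> idx d n \<Longrightarrow> b(j := y) \<in> idx d n \<Longrightarrow>
    A (a(j := x)) (b(j := y)) = (if x = y then A' a b else 0)"
proof -
  obtain Y where Y: "\<And>a b. a \<in> idx d n \<Longrightarrow> b \<in> idx d n \<Longrightarrow>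
      A a b = (if \<forall>m\<in>{..<n} - I. a m = b m then Y (restrict a I) (restrict b I) else 0)"
    using assms(1) unfolding acts_only_on_def by blast
  have "restrict (c(j := x)) I = restrict c I" for c :: "nat \<Rightarrow> nat" and x
    using assms(2) by (auto simp: restrict_def)
  moreover have "(\<forall>m\<in>{..<n} - I. (a(j := x)) m = (b(j := y)) m) \<longleftrightarrow>
      x = y \<and> (\<forall>m\<in>{..<n} - I - {j}. a m = b m)" for a b :: "nat \<Rightarrow> nat" and x y
    using assms(2,3) by auto
  ultimately show thesis
    by (intro that[of "\<lambda>a b. if \<forall>m\<in>{..<n} - I - {j}. a m = b m
        then Y (restrict a I) (restrict b I) else 0"]) (auto simp: Y)
qed

lemma cond_exp_eq_self:
  assumes "acts_only_on d n I A" "j \<notin> I" "j < n" and trace: "(\<Sum>k<d j. \<rho> j k k) = 1"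
  shows "cond_exp d n \<rho> j A = A"
proof (intro ext)
  obtain A' where A': "\<And>a b x y. a(j := x) \<in> idx d n \<Longrightarrow> b(j := y) \<in> idx d n \<Longrightarrow>
      A (a(j := x)) (b(j := y)) = (if x = y then A' a b else 0)"
    using acts_only_on_tensor_id[OF assms(1-3)] by blast
  fix a b
  show "cond_exp d n \<rho> j A a b = A a b"
  proof (cases "a \<in> idx d n \<and> b \<in> idx d n")
    case True
    have "A a b = (if a j = b j then A' a b else 0)"
      using A'[of a "a j" b "b j"] True by simp
    moreover have "cond_exp d n \<rho> j A a b = (if a j = b j then (\<Sum>k<d j. \<rho> j k k) * A' a b else 0)"
      using True assms(3)
      by (auto simp: cond_exp_def A' idx_fun_upd sum_distrib_right if_distrib[of "(*) _"] cong: if_cong)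
    ultimately show ?thesis
      using trace by simp
  next
    case False
    then show ?thesis
      using assms(1) unfolding acts_only_on_def is_op_def cond_exp_def by auto
  qed
qed

lemma cond_exp_idem:
  assumes "is_op d n Y" "i < n" "(\<Sum>k<d i. \<rho> i k k) = 1"
  shows "cond_exp d n \<rho> i (cond_exp d n \<rho> i Y) = cond_exp d n \<rho> i Y"
  using acts_only_on_cond_exp[OF acts_only_on_all[OF assms(1)], of i \<rho>] assms
  by (intro cond_exp_eq_self[where I = "{..<n} - {i}"]) auto

section \<open>Iterated partial expectations\<close>

lemma foldr_commute:
  assumes "\<And>y z. y \<in> set xs \<Longrightarrow> f x (f y z) = f y (f x z)"
  shows "foldr f xs (f x z) = f x (foldr f xs z)"
  using assms by (induction xs) simp_all

lemma foldr_insort_commute: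
  assumes "\<And>y z. y \<in> set xs \<Longrightarrow> f x (f y z) = f y (f x z)"
  shows "foldr f (insort x xs) z = f x (foldr f xs z)"
  using assms by (induction xs) simp_all

lemma cond_exp_set_empty [simp]: "cond_exp_set d n \<rho> {} Y = Y"
  by (simp add: cond_exp_set_def)

lemma cond_exp_set_insert:
  assumes "S \<subseteq> {..<n}" "i < n" "i \<notin> S"
  shows "cond_exp_set d n \<rho> (insert i S) Y = cond_exp d n \<rho> i (cond_exp_set d n \<rho> S Y)"
proof -
  have "finite S"
    using assms(1) finite_subset by blast
  then show ?thesis
    using assms unfolding cond_exp_set_def
    by (auto simp: sorted_list_of_set_insert intro!: foldr_insort_commute cond_exp_commute)
qed

lemma cond_exp_set_commute:
  assumes "S \<subseteq> {..<n}" "i < n"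
  shows "cond_exp_set d n \<rho> S (cond_exp d n \<rho> i Y) = cond_exp d n \<rho> i (cond_exp_set d n \<rho> S Y)"
proof -
  have "finite S"
    using assms(1) finite_subset by blast
  then show ?thesis
    using assms unfolding cond_exp_set_def
    by (auto intro!: foldr_commute cond_exp_commute)
qed

lemma cond_exp_set_sum:
  "cond_exp_set d n \<rho> S (\<lambda>a b. \<Sum>t\<in>A. c t * F t a b) =
   (\<lambda>a b. \<Sum>t\<in>A. c t * cond_exp_set d n \<rho> S (F t) a b)"
proof -
  have "foldr (cond_exp d n \<rho>) xs (\<lambda>a b. \<Sum>t\<in>A. c t * F t a b) =
      (\<lambda>a b. \<Sum>t\<in>A. c t * foldr (cond_exp d n \<rho>) xs (F t) a b)" for xs
    by (induction xs) (simp_all add: cond_exp_sum)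
  then show ?thesis
    unfolding cond_exp_set_def .
qed

lemma cond_exp_set_lincomb:
  "cond_exp_set d n \<rho> S (\<lambda>a b. r * X a b + s * Z a b) =
   (\<lambda>a b. r * cond_exp_set d n \<rho> S X a b + s * cond_exp_set d n \<rho> S Z a b)"
proof -
  have "foldr (cond_exp d n \<rho>) xs (\<lambda>a b. r * X a b + s * Z a b) =
      (\<lambda>a b. r * foldr (cond_exp d n \<rho>) xs X a b + s * foldr (cond_exp d n \<rho>) xs Z a b)" for xs
    by (induction xs) (simp_all add: cond_exp_lincomb)
  then show ?thesis
    unfolding cond_exp_set_def .
qed

lemma cond_exp_set_is_op:
  assumes "S \<subseteq> {..<n}" "is_op d n X"
  shows "is_op d n (cond_exp_set d n \<rho> S X)"
  using finite_subset[OF assms(1) finite_lessThan] assms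
proof (induction S rule: finite_induct)
  case (insert i S)
  then show ?case
    by (simp add: cond_exp_set_insert cond_exp_is_op)
qed simp

lemma cond_exp_set_observable:
  assumes "S \<subseteq> {..<n}" "observable d n X" and herm: "\<forall>i<n. \<forall>k l. \<rho> i k l = cnj (\<rho> i l k)"
  shows "observable d n (cond_exp_set d n \<rho> S X)"
  using finite_subset[OF assms(1) finite_lessThan] assms(1)
proof (induction S rule: finite_induct)
  case (insert i S)
  have "observable d n (cond_exp_set d n \<rho> S X)"
    using insert by simp
  then have "observable d n (cond_exp d n \<rho> i (cond_exp_set d n \<rho> S X))"
    by (rule cond_exp_observable) (use herm insert.prems in blast)
  then show ?case
    using insert by (simp add: cond_exp_set_insert)
qed (use assms(2) in simp)

lemma cond_exp_set_acts_only_on: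
  assumes "S \<subseteq> {..<n}" "is_op d n X"
  shows "acts_only_on d n ({..<n} - S) (cond_exp_set d n \<rho> S X)"
  using finite_subset[OF assms(1) finite_lessThan] assms
proof (induction S rule: finite_induct)
  case (insert i S)
  then have "acts_only_on d n ({..<n} - S - {i}) (cond_exp d n \<rho> i (cond_exp_set d n \<rho> S X))"
    by (intro acts_only_on_cond_exp) auto
  moreover have "cond_exp_set d n \<rho> (insert i S) X = cond_exp d n \<rho> i (cond_exp_set d n \<rho> S X)"
    using insert by (intro cond_exp_set_insert) auto
  moreover have "{..<n} - insert i S = {..<n} - S - {i}"
    by auto
  ultimately show ?case
    by simp
qed (simp add: acts_only_on_all)

lemma cond_exp_set_eq_self:
  assumes "S \<subseteq> {..<n}" "acts_only_on d n J Z" "S \<inter> J = {}"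
    and trace: "\<forall>i<n. (\<Sum>k<d i. \<rho> i k k) = 1"
  shows "cond_exp_set d n \<rho> S Z = Z"
  using finite_subset[OF assms(1) finite_lessThan] assms(1,3)
proof (induction S rule: finite_induct)
  case (insert i S)
  then have "cond_exp d n \<rho> i Z = Z"
    using trace by (intro cond_exp_eq_self[OF assms(2)]) auto
  then show ?case
    using insert by (simp add: cond_exp_set_insert)
qed simp

lemma cond_exp_set_eq_0:
  assumes "S \<subseteq> {..<n}" "j \<in> S" "cond_exp d n \<rho> j Z = (\<lambda>a b. 0)"
  shows "cond_exp_set d n \<rho> S Z = (\<lambda>a b. 0)"
proof -
  have "cond_exp_set d n \<rho> S Z = cond_exp_set d n \<rho> (insert j (S - {j})) Z"
    using assms(2) by (simp add: insert_absorb)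
  also have "\<dots> = cond_exp d n \<rho> j (cond_exp_set d n \<rho> (S - {j}) Z)"
    using assms by (intro cond_exp_set_insert) auto
  also have "\<dots> = cond_exp_set d n \<rho> (S - {j}) (cond_exp d n \<rho> j Z)"
    using assms by (intro cond_exp_set_commute[symmetric]) auto
  also have "\<dots> = (\<lambda>a b. 0)"
    using assms(3) cond_exp_set_sum[where A = "{}"] by simp
  finally show ?thesis .
qed

lemma cond_exp_cond_exp_set:
  assumes "S \<subseteq> {..<n}" "j < n" "is_op d n X" "\<forall>i<n. (\<Sum>k<d i. \<rho> i k k) = 1"
  shows "cond_exp d n \<rho> j (cond_exp_set d n \<rho> S X) = cond_exp_set d n \<rho> (insert j S) X"
proof (cases "j \<in> S")
  case True
  have "cond_exp_set d n \<rho> S X = cond_exp_set d n \<rho> (insert j (S - {j})) X"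
    using True by (simp add: insert_absorb)
  also have "\<dots> = cond_exp d n \<rho> j (cond_exp_set d n \<rho> (S - {j}) X)"
    using assms by (intro cond_exp_set_insert) auto
  finally have S: "cond_exp_set d n \<rho> S X = cond_exp d n \<rho> j (cond_exp_set d n \<rho> (S - {j}) X)" .
  have "is_op d n (cond_exp_set d n \<rho> (S - {j}) X)"
    using assms by (intro cond_exp_set_is_op) auto
  then show ?thesis
    using assms True by (simp add: S insert_absorb cond_exp_idem)
qed (use assms in \<open>simp add: cond_exp_set_insert\<close>)

lemma cond_exp_set_compl_sum:
  assumes "K \<subseteq> {..<n}"
    and Y: "\<And>I. I \<subseteq> {..<n} \<Longrightarrow> acts_only_on d n I (Y I)"
      "\<And>I j. I \<subseteq> {..<n} \<Longrightarrow> j \<in> I \<Longrightarrow> cond_exp d n \<rho> j (Y I) = (\<lambda>a b. 0)"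
    and trace: "\<forall>i<n. (\<Sum>k<d i. \<rho> i k k) = 1"
  shows "cond_exp_set d n \<rho> ({..<n} - K) (\<lambda>a b. \<Sum>I\<in>Pow {..<n}. Y I a b) = (\<lambda>a b. \<Sum>I\<in>Pow K. Y I a b)"
proof -
  have summand: "cond_exp_set d n \<rho> ({..<n} - K) (Y I) a b = (if I \<subseteq> K then Y I a b else 0)"
    if "I \<subseteq> {..<n}" for I a b
  proof (cases "I \<subseteq> K")
    case True
    then show ?thesis
      using that Y(1) trace by (simp add: cond_exp_set_eq_self[where J = I] Diff_Int_distrib2 inf.absorb2)
  next
    case False
    then obtain j where "j \<in> I" "j \<notin> K"
      by blast
    then have "cond_exp_set d n \<rho> ({..<n} - K) (Y I) = (\<lambda>a b. 0)"
      using that Y(2) by (intro cond_exp_set_eq_0[of _ n j]) auto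
    then show ?thesis
      using False by simp
  qed
  have "{I \<in> Pow {..<n}. I \<subseteq> K} = Pow K"
    using assms(1) by auto
  then show ?thesis
    using cond_exp_set_sum[where c = "\<lambda>_. 1" and F = Y and A = "Pow {..<n}" and S = "{..<n} - K"]
    by (simp add: summand flip: sum.inter_filter)
qed

section \<open>Orthogonality\<close>

lemma sum_idx_split:
  assumes "j < n"
  shows "(\<Sum>a\<in>idx d n. f a) = (\<Sum>a\<in>PiE ({..<n} - {j}) (\<lambda>i. {..<d i}). \<Sum>x<d j. f (a(j := x)))"
proof -
  let ?P = "PiE ({..<n} - {j}) (\<lambda>i. {..<d i})"
  have "idx d n = (\<lambda>(x, a). a(j := x)) ` ({..<d j} \<times> ?P)"
    unfolding idx_def using PiE_insert_eq[of j "{..<n} - {j}" "\<lambda>i. {..<d i}"] assms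
    by (simp add: insert_absorb)
  moreover have "inj_on (\<lambda>(x, a). a(j := x)) ({..<d j} \<times> ?P)"
    using inj_combinator[of j "{..<n} - {j}" "\<lambda>i. {..<d i}"] by simp
  ultimately have "(\<Sum>a\<in>idx d n. f a) = (\<Sum>x<d j. \<Sum>a\<in>?P. f (a(j := x)))"
    by (simp add: sum.reindex sum.cartesian_product prod.case_distrib)
  then show ?thesis
    by (simp add: sum.swap[of _ "{..<d j}" ?P])
qed

lemma prod_state_fun_upd:
  assumes "j < n" "a(j := x) \<in> idx d n" "b(j := y) \<in> idx d n"
  shows "prod_state d n \<rho> (a(j := x)) (b(j := y)) = \<rho> j x y * (\<Prod>i\<in>{..<n} - {j}. \<rho> i (a i) (b i))"
  using assms by (simp add: prod_state_def prod.remove[of _ j])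

lemma inner_state_eq_0:
  assumes "acts_only_on d n I A" "j \<notin> I" "j < n" "cond_exp d n \<rho> j B = (\<lambda>a b. 0)"
  shows "inner_state d n (prod_state d n \<rho>) A B = 0"
proof -
  obtain A' where A': "\<And>a b x y. a(j := x) \<in> idx d n \<Longrightarrow> b(j := y) \<in> idx d n \<Longrightarrow>
      A (a(j := x)) (b(j := y)) = (if x = y then A' a b else 0)"
    using acts_only_on_tensor_id[OF assms(1-3)] by blast
  define P where "P = PiE ({..<n} - {j}) (\<lambda>i. {..<d i})"
  define \<sigma> where "\<sigma> a b = (\<Prod>i\<in>{..<n} - {j}. \<rho> i (a i) (b i))" for a b
  have mem: "a(j := x) \<in> idx d n" if "a \<in> P" "x < d j" for a x
    using that assms(3) unfolding P_def idx_def by (auto simp: PiE_iff extensional_def)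
  \<comment> \<open>the partial trace of B against rho_j is an entry of E_j B\<close>
  have partial: "(\<Sum>x<d j. \<Sum>y<d j. \<rho> j x y * B (c(j := y)) (a(j := x))) = 0" if "a \<in> P" "c \<in> P" for a c
  proof (cases "d j = 0")
    case False
    have "cond_exp d n \<rho> j B (c(j := 0)) (a(j := 0)) = 0"
      using assms(4) by simp
    then show ?thesis
      using that False mem by (simp add: cond_exp_def)
  qed simp
  have delta: "(\<Sum>z<d j. \<rho> j x y * \<sigma> a b * cnj (if z = y then A' c b else 0) * B (c(j := z)) (a(j := x)))
      = \<rho> j x y * \<sigma> a b * cnj (A' c b) * B (c(j := y)) (a(j := x))" if "y < d j" for x y a b c
    using that by (simp add: sum.remove[of _ y])
  have prod: "prod_state d n \<rho> (a(j := x)) (b(j := y)) = \<rho> j x y * \<sigma> a b"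
    if "a \<in> P" "x < d j" "b \<in> P" "y < d j" for a b x y
    using that assms(3) by (simp add: mem prod_state_fun_upd \<sigma>_def)
  have "inner_state d n (prod_state d n \<rho>) A B =
      (\<Sum>a\<in>P. \<Sum>x<d j. \<Sum>b\<in>P. \<Sum>y<d j. \<Sum>c\<in>P. \<Sum>z<d j.
        prod_state d n \<rho> (a(j := x)) (b(j := y)) * cnj (A (c(j := z)) (b(j := y))) *
        B (c(j := z)) (a(j := x)))"
    unfolding inner_state_def P_def sum_idx_split[OF assms(3)] ..
  also have "\<dots> = (\<Sum>a\<in>P. \<Sum>x<d j. \<Sum>b\<in>P. \<Sum>y<d j. \<Sum>c\<in>P.
      \<rho> j x y * \<sigma> a b * cnj (A' c b) * B (c(j := y)) (a(j := x)))"
    by (simp add: mem prod A' delta)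
  also have "\<dots> = (\<Sum>a\<in>P. \<Sum>b\<in>P. \<Sum>c\<in>P. \<sigma> a b * cnj (A' c b) *
      (\<Sum>x<d j. \<Sum>y<d j. \<rho> j x y * B (c(j := y)) (a(j := x))))"
    by (simp add: sum.swap[of _ "{..<d j}" P] sum_distrib_left mult_ac)
  also have "\<dots> = 0"
    by (simp add: partial)
  finally show ?thesis .
qed

lemma inner_state_prod_state_cnj:
  assumes herm: "\<forall>i<n. \<forall>k l. \<rho> i k l = cnj (\<rho> i l k)"
  shows "cnj (inner_state d n (prod_state d n \<rho>) Z Y) = inner_state d n (prod_state d n \<rho>) Y Z"
proof -
  have "cnj (\<rho> i k l) = \<rho> i l k" if "i < n" for i k l
    using herm that by (metis complex_cnj_cnj)
  then have "cnj (prod_state d n \<rho> a b) = prod_state d n \<rho> b a" for a b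
    unfolding prod_state_def by simp
  then have "cnj (inner_state d n (prod_state d n \<rho>) Z Y) =
      (\<Sum>a\<in>idx d n. \<Sum>b\<in>idx d n. \<Sum>c\<in>idx d n. prod_state d n \<rho> b a * cnj (Y c a) * Z c b)"
    unfolding inner_state_def by (simp add: mult_ac)
  also have "\<dots> = inner_state d n (prod_state d n \<rho>) Y Z"
    unfolding inner_state_def by (rule sum.swap)
  finally show ?thesis .
qed

section \<open>The Efron-Stein decomposition\<close>

definition efron_stein ::
    "(nat \<Rightarrow> nat) \<Rightarrow> nat \<Rightarrow> (nat \<Rightarrow> nat \<Rightarrow> nat \<Rightarrow> complex) \<Rightarrow> qop \<Rightarrow> nat set \<Rightarrow> qop"
  where "efron_stein d n \<rho> X J =
    (\<lambda>a b. \<Sum>I\<in>Pow J. (-1) ^ (card J - card I) * cond_exp_set d n \<rho> ({..<n} - I) X a b)"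

lemma efron_stein_lincomb:
  "efron_stein d n \<rho> (\<lambda>a b. r * X a b + s * Z a b) J =
   (\<lambda>a b. r * efron_stein d n \<rho> X J a b + s * efron_stein d n \<rho> Z J a b)"
  unfolding efron_stein_def cond_exp_set_lincomb
  by (simp add: sum.distrib sum_distrib_left algebra_simps)

lemma efron_stein_partial_sum:
  assumes "finite J"
  shows "(\<lambda>a b. \<Sum>I\<in>Pow J. efron_stein d n \<rho> X I a b) = cond_exp_set d n \<rho> ({..<n} - J) X"
  unfolding efron_stein_def
  by (intro ext) (rule sum_Pow_mobius[OF assms])

lemma efron_stein_acts_only_on:
  assumes "is_op d n X"
  shows "acts_only_on d n J (efron_stein d n \<rho> X J)"
  unfolding efron_stein_def
proof (rule acts_only_on_sum)
  fix I
  assume "I \<in> Pow J"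
  have "acts_only_on d n ({..<n} - ({..<n} - I)) (cond_exp_set d n \<rho> ({..<n} - I) X)"
    using assms by (intro cond_exp_set_acts_only_on) auto
  then show "acts_only_on d n J (cond_exp_set d n \<rho> ({..<n} - I) X)"
    by (rule acts_only_on_mono) (use \<open>I \<in> Pow J\<close> in auto)
qed

lemma efron_stein_observable:
  assumes "observable d n X" "\<forall>i<n. \<forall>k l. \<rho> i k l = cnj (\<rho> i l k)"
  shows "observable d n (efron_stein d n \<rho> X J)"
  unfolding efron_stein_def
  by (intro observable_sum cond_exp_set_observable assms) auto

lemma efron_stein_cond_exp:
  assumes "is_op d n X" "J \<subseteq> {..<n}" "j \<in> J" "\<forall>i<n. (\<Sum>k<d i. \<rho> i k k) = 1"
  shows "cond_exp d n \<rho> j (efron_stein d n \<rho> X J) = (\<lambda>a b. 0)"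
proof (intro ext)
  fix a b
  have "insert j ({..<n} - I) = {..<n} - (I - {j})" for I
    using assms(2,3) by auto
  then have "cond_exp d n \<rho> j (efron_stein d n \<rho> X J) a b =
      (\<Sum>I\<in>Pow J. (-1) ^ (card J - card I) * cond_exp_set d n \<rho> ({..<n} - (I - {j})) X a b)"
    unfolding efron_stein_def cond_exp_sum
    using assms by (simp add: cond_exp_cond_exp_set subset_iff)
  also have "\<dots> = 0"
    using assms(2,3) finite_subset
    by (intro alternating_sum_Pow_Diff_singleton[of J j "\<lambda>K. cond_exp_set d n \<rho> ({..<n} - K) X a b"]) auto
  finally show "cond_exp d n \<rho> j (efron_stein d n \<rho> X J) a b = 0" .
qed

lemma efron_stein_unique:
  assumes "J \<subseteq> {..<n}"
    and Y: "\<And>I. I \<subseteq> {..<n} \<Longrightarrow> acts_only_on d n I (Y I)"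
      "\<And>I j. I \<subseteq> {..<n} \<Longrightarrow> j \<in> I \<Longrightarrow> cond_exp d n \<rho> j (Y I) = (\<lambda>a b. 0)"
    and trace: "\<forall>i<n. (\<Sum>k<d i. \<rho> i k k) = 1"
  shows "Y J = efron_stein d n \<rho> (\<lambda>a b. \<Sum>I\<in>Pow {..<n}. Y I a b) J"
proof (intro ext)
  fix a b
  have "finite J"
    using assms(1) finite_subset by blast
  have "efron_stein d n \<rho> (\<lambda>a b. \<Sum>I\<in>Pow {..<n}. Y I a b) J a b =
      (\<Sum>I\<in>Pow J. (-1) ^ (card J - card I) * (\<Sum>I'\<in>Pow I. Y I' a b))"
    unfolding efron_stein_def
  proof (rule sum.cong[OF refl])
    fix I
    assume "I \<in> Pow J"
    then have "I \<subseteq> {..<n}"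
      using assms(1) by auto
    then show "(-1) ^ (card J - card I) *
          cond_exp_set d n \<rho> ({..<n} - I) (\<lambda>a b. \<Sum>I\<in>Pow {..<n}. Y I a b) a b =
        (-1) ^ (card J - card I) * (\<Sum>I'\<in>Pow I. Y I' a b)"
      by (simp add: cond_exp_set_compl_sum[OF _ Y trace])
  qed
  also have "\<dots> = Y J a b"
    by (rule inclusion_exclusion_mobius[symmetric]) (simp_all add: \<open>finite J\<close>)
  finally show "Y J a b = efron_stein d n \<rho> (\<lambda>a b. \<Sum>I\<in>Pow {..<n}. Y I a b) J a b"
    by simp
qed

lemma efron_stein_orthogonal:
  assumes "is_op d n X" "I \<subseteq> {..<n}" "J \<subseteq> {..<n}" "I \<noteq> J"
    and herm: "\<forall>i<n. \<forall>k l. \<rho> i k l = cnj (\<rho> i l k)"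
    and trace: "\<forall>i<n. (\<Sum>k<d i. \<rho> i k k) = 1"
  shows "inner_state d n (prod_state d n \<rho>) (efron_stein d n \<rho> X I) (efron_stein d n \<rho> X J) = 0"
proof -
  have ortho: "inner_state d n (prod_state d n \<rho>) (efron_stein d n \<rho> X I') (efron_stein d n \<rho> X J') = 0"
    if "J' \<subseteq> {..<n}" "j \<in> J'" "j \<notin> I'" for I' J' j
    using that assms(1) trace
    by (intro inner_state_eq_0[OF efron_stein_acts_only_on]) (auto intro: efron_stein_cond_exp)
  from assms(4) consider j where "j \<in> J" "j \<notin> I" | i where "i \<in> I" "i \<notin> J"
    by blast
  then show ?thesis
  proof cases
    case 1
    then show ?thesis
      using assms(3) ortho by blast
  next
    case 2
    then have "inner_state d n (prod_state d n \<rho>) (efron_stein d n \<rho> X J) (efron_stein d n \<rho> X I) = 0"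
      using assms(2) ortho by blast
    then show ?thesis
      using inner_state_prod_state_cnj[OF herm, where d = d
          and Z = "efron_stein d n \<rho> X J" and Y = "efron_stein d n \<rho> X I"]
      by simp
  qed
qed

theorem theorem6p9:
  fixes d :: "nat \<Rightarrow> nat" and n :: nat
    and \<rho> :: "nat \<Rightarrow> nat \<Rightarrow> nat \<Rightarrow> complex"
  assumes states: "\<forall>i<n. density (d i) (\<rho> i)"
  shows "\<exists>D :: qop \<Rightarrow> nat set \<Rightarrow> qop.
    \<comment> \<open>existence: X = sum of X^{=J} with properties (1) and (2)\<close>
    (\<forall>X. observable d n X \<longrightarrow>
       (\<forall>J. J \<subseteq> {..<n} \<longrightarrow>
          observable d n (D X J) \<and> acts_only_on d n J (D X J) \<and>
          (\<forall>j\<in>J. cond_exp d n \<rho> j (D X J) = (\<lambda>a b. 0))) \<and>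
       X = (\<lambda>a b. \<Sum>J\<in>Pow {..<n}. D X J a b)) \<and>
    \<comment> \<open>uniqueness\<close>
    (\<forall>X Y. observable d n X \<longrightarrow>
       (\<forall>J. J \<subseteq> {..<n} \<longrightarrow>
          observable d n (Y J) \<and> acts_only_on d n J (Y J) \<and>
          (\<forall>j\<in>J. cond_exp d n \<rho> j (Y J) = (\<lambda>a b. 0))) \<longrightarrow>
       X = (\<lambda>a b. \<Sum>J\<in>Pow {..<n}. Y J a b) \<longrightarrow>
       (\<forall>J. J \<subseteq> {..<n} \<longrightarrow> Y J = D X J)) \<and>
    \<comment> \<open>(3) linearity and partial sums\<close>
    (\<forall>J. J \<subseteq> {..<n} \<longrightarrow>
       (\<forall>X Z (r::real) (s::real). observable d n X \<longrightarrow> observable d n Z \<longrightarrow>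
          D (\<lambda>a b. of_real r * X a b + of_real s * Z a b) J =
          (\<lambda>a b. of_real r * D X J a b + of_real s * D Z J a b)) \<and>
       (\<forall>X. observable d n X \<longrightarrow>
          (\<lambda>a b. \<Sum>I\<in>Pow J. D X I a b) = cond_exp_set d n \<rho> ({..<n} - J) X)) \<and>
    \<comment> \<open>(4) orthogonality\<close>
    (\<forall>X I J. observable d n X \<longrightarrow> I \<subseteq> {..<n} \<longrightarrow> J \<subseteq> {..<n} \<longrightarrow> I \<noteq> J \<longrightarrow>
       inner_state d n (prod_state d n \<rho>) (D X I) (D X J) = 0)"
proof -
  have herm: "\<forall>i<n. \<forall>k l. \<rho> i k l = cnj (\<rho> i l k)" and trace: "\<forall>i<n. (\<Sum>k<d i. \<rho> i k k) = 1"
    using states unfolding density_def by blast+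
  have op: "is_op d n X" if "observable d n X" for X
    using that unfolding observable_def by blast
  show ?thesis
    apply (intro exI[of _ "efron_stein d n \<rho>"] conjI allI impI ballI)
    subgoal by (rule efron_stein_observable[OF _ herm])
    subgoal by (intro efron_stein_acts_only_on op)
    subgoal using trace by (intro efron_stein_cond_exp op)
    subgoal using efron_stein_partial_sum[of "{..<n}"] by simp
    subgoal using trace by (simp add: efron_stein_unique)
    subgoal by (rule efron_stein_lincomb)
    subgoal by (intro efron_stein_partial_sum finite_subset[OF _ finite_lessThan])
    subgoal using trace by (intro efron_stein_orthogonal[OF op _ _ _ herm])
    done
qed

end
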